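(* Let $h\colon\mathbb{R}^p\to\mathbb{R}$ satisfy $\mathbb{E}\bigl(|h(\theta)|\bigr)<\infty$. Then for $f_S$-almost all $s^*\in\mathbb{R}^q$ and all $\delta>0$, $n\in\mathbb{N}$, $$\mathbb{E}\bigl(h(\theta)\mid S=s^*\bigr)=\frac{\phi_h(s^* )}{\phi_1(s^* )}\quad\text{and}\quad \mathbb{E}\bigl(Y^{(\delta)}_n\bigr)=\mathbb{E}\bigl(h(\theta^{(\delta)}_1)\bigr)=\frac{\phi^{(\delta)}_h(s^* )}{\phi^{(\delta)}_1(s^* )}.$$
   Context: Let $p,q\ge1$. Let $(\theta,S)$ be a random vector in $\mathbb{R}^p\times\mathbb{R}^q$ with joint Lebesgue density $f_{S,\theta}(s,t)$, marginals $f_S(s)=\int f_{S,\theta}(s,t)\,dt$, $f_\theta(t)=\int f_{S,\theta}(s,t)\,ds$, and conditional density $f_{\theta|S}(t\mid s)=f_{S,\theta}(s,t)/f_S(s)$ if $f_S(s)>0$, $0$ otherwise; conditional expectations given $S=s$ use this density. ABC algorithm: given $s^*$, $\delta>0$, $n\in\mathbb{N}$, repeatedly draw independent pairs $(\theta,S)$ from the joint distribution, accepting $\theta$ whenever $\|S-s^*\|\le\delta$ (Euclidean norm), until $n$ values $\theta^{(\delta)}_1,\dots,\theta^{(\delta)}_n$ are accepted; $Y^{(\delta)}_n=\frac1n\sum_{j=1}^n h(\theta^{(\delta)}_j)$. For $h$ with $\mathbb{E}|h(\theta)|<\infty$ define $\phi_h(s)=\int_{\mathbb{R}^p}h(t)f_{S,\theta}(s,t)\,dt$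 and $\phi^{(\delta)}_h(s^* )=\frac{1}{|B(s^*,\delta)|}\int_{B(s^*,\delta)}\phi_h(s)\,ds$, where $B(s^*,\delta)$ is the closed Euclidean ball of radius $\delta$ about $s^*$ and $|B(s^*,\delta)|$ its volume; $\phi_1$ denotes $\phi_h$ for $h\equiv1$ (so $\phi_1=f_S$). *)

theory Defs
  imports "HOL-Probability.Probability"
begin

text \<open>Joint density f s t of (S, theta); s in R^q (type 'b), t in R^p (type 'a).\<close>

definition f_S :: "('b::euclidean_space \<Rightarrow> 'a::euclidean_space \<Rightarrow> real) \<Rightarrow> 'b \<Rightarrow> real" where
  "f_S f s = (\<integral>t. f s t \<partial>lborel)"

definition cond_dens :: "('b::euclidean_space \<Rightarrow> 'a::euclidean_space \<Rightarrow> real) \<Rightarrow> 'a \<Rightarrow> 'b \<Rightarrow> real" where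
  "cond_dens f t s = (if f_S f s > 0 then f s t / f_S f s else 0)"

definition cond_exp :: "('b::euclidean_space \<Rightarrow> 'a::euclidean_space \<Rightarrow> real) \<Rightarrow> ('a \<Rightarrow> real) \<Rightarrow> 'b \<Rightarrow> real" where
  "cond_exp f h s = (\<integral>t. h t * cond_dens f t s \<partial>lborel)"

definition phi :: "('b::euclidean_space \<Rightarrow> 'a::euclidean_space \<Rightarrow> real) \<Rightarrow> ('a \<Rightarrow> real) \<Rightarrow> 'b \<Rightarrow> real" where
  "phi f h s = (\<integral>t. h t * f s t \<partial>lborel)"

definition phi_delta :: "('b::euclidean_space \<Rightarrow> 'a::euclidean_space \<Rightarrow> real) \<Rightarrow> ('a \<Rightarrow> real) \<Rightarrow> 'b \<Rightarrow> real \<Rightarrow> real" where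
  "phi_delta f h s\<^sub>0 \<delta> = (LINT s:cball s\<^sub>0 \<delta>|lborel. phi f h s) / measure lborel (cball s\<^sub>0 \<delta>)"

text \<open>ABC rejection sampler driven by an i.i.d. sequence X i = (S_i, theta_i):
  the indices of accepted draws, the j-th accepted value (0-based, so theta_abc .. j
  is theta^(delta)_(j+1) of the paper), and the average Y_n.\<close>
definition acc_set :: "(nat \<Rightarrow> 'm \<Rightarrow> 'b::euclidean_space \<times> 'a) \<Rightarrow> 'b \<Rightarrow> real \<Rightarrow> 'm \<Rightarrow> nat set" where
  "acc_set X s\<^sub>0 \<delta> \<omega> = {i. norm (fst (X i \<omega>) - s\<^sub>0) \<le> \<delta>}"

definition theta_abc :: "(nat \<Rightarrow> 'm \<Rightarrow> 'b::euclidean_space \<times> 'a) \<Rightarrow> 'b \<Rightarrow> real \<Rightarrow> nat \<Rightarrow> 'm \<Rightarrow> 'a" where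
  "theta_abc X s\<^sub>0 \<delta> j \<omega> = snd (X (enumerate (acc_set X s\<^sub>0 \<delta> \<omega>) j) \<omega>)"

definition Y_abc :: "(nat \<Rightarrow> 'm \<Rightarrow> 'b::euclidean_space \<times> 'a) \<Rightarrow> ('a \<Rightarrow> real) \<Rightarrow> 'b \<Rightarrow> real \<Rightarrow> nat \<Rightarrow> 'm \<Rightarrow> real" where
  "Y_abc X h s\<^sub>0 \<delta> n \<omega> = (\<Sum>j<n. h (theta_abc X s\<^sub>0 \<delta> j \<omega>)) / real n"

end

theory Submission
  imports Defs
begin

text \<open>
  The first identity holds pointwise: where \<open>f_S f s > 0\<close> the conditional density
  is \<open>f s t / f_S f s\<close>, elsewhere both sides vanish. For the sampler, the \<open>j\<close>-th
  accepted draw is \<open>X i\<close> exactly when \<open>X i\<close> lies in the acceptance region \<open>E\<close> and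
  exactly \<open>j\<close> of \<open>X 0, \<dots>, X (i - 1)\<close> do. The second condition depends only on the
  past, so independence gives
  \<open>E[g (X (accepted j))] = (\<Sum>i. P(j acceptances before i)) \<cdot> E[1\<^sub>E (X 0) g (X 0)]\<close>,
  and \<open>g = 1\<close> identifies the sum as \<open>1 / P(X 0 \<in> E)\<close>. Fubini turns both expectations
  into integrals of \<open>\<phi>\<close> over the ball. Almost every \<open>s\<^sup>*\<close> has balls of positive
  mass around it, which makes the sampler accept infinitely often almost surely.
\<close>

lemma card_less_enumerate:
  fixes S :: "nat set"
  assumes S: "infinite S"
  shows "card {k. k < enumerate S m \<and> k \<in> S} = m"
proof -
  have "{k. k < enumerate S m \<and> k \<in> S} = enumerate S ` {..<m}"
  proof safe
    fix k assume k: "k < enumerate S m" "k \<in> S"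
    then obtain m' where m': "enumerate S m' = k" using enumerate_Ex[OF S] by blast
    with k S have "m' < m" by (metis enumerate_mono_iff)
    then show "k \<in> enumerate S ` {..<m}" using m' by auto
  next
    fix m' assume "m' < m"
    then show "enumerate S m' < enumerate S m" "enumerate S m' \<in> S"
      using S by (auto intro: enumerate_in_set)
  qed
  moreover have "inj_on (enumerate S) {..<m}"
    using inj_enumerate[OF S] by (auto intro: inj_on_subset)
  ultimately show ?thesis by (simp add: card_image)
qed

lemma enumerate_eq_iff:
  fixes S :: "nat set"
  assumes S: "infinite S"
  shows "enumerate S j = i \<longleftrightarrow> i \<in> S \<and> card {k. k < i \<and> k \<in> S} = j"
proof
  assume "enumerate S j = i"
  then show "i \<in> S \<and> card {k. k < i \<and> k \<in> S} = j"
    using card_less_enumerate[OF S, of j] enumerate_in_set[OF S] by auto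
next
  assume i: "i \<in> S \<and> card {k. k < i \<and> k \<in> S} = j"
  then obtain m where "enumerate S m = i" using enumerate_Ex[OF S] by blast
  with i show "enumerate S j = i" using card_less_enumerate[OF S, of m] by auto
qed

lemma measurable_enumerate:
  fixes A :: "'a \<Rightarrow> nat set"
  assumes "\<And>i. {\<omega>\<in>space M. i \<in> A \<omega>} \<in> sets M"
  shows "(\<lambda>\<omega>. enumerate (A \<omega>) j) \<in> measurable M (count_space UNIV)"
  using assms
proof (induction j arbitrary: A)
  case 0
  have "Measurable.pred M (\<lambda>\<omega>. i \<in> A \<omega>)" for i
    using 0[of i] by (simp add: pred_def)
  then show ?case unfolding enumerate_0 by (rule measurable_Least)
next
  case (Suc j)
  have [measurable]: "Measurable.pred M (\<lambda>\<omega>. i \<in> A \<omega>)" for i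
    using Suc.prems[of i] by (simp add: pred_def)
  have [measurable]: "(\<lambda>\<omega>. LEAST n. n \<in> A \<omega>) \<in> measurable M (count_space UNIV)"
    by (rule measurable_Least) simp
  have "Measurable.pred M (\<lambda>\<omega>. i \<in> A \<omega> - {LEAST n. n \<in> A \<omega>})" for i
    by measurable
  then have "{\<omega>\<in>space M. i \<in> A \<omega> - {LEAST n. n \<in> A \<omega>}} \<in> sets M" for i
    by (simp add: pred_def)
  from Suc.IH[OF this] show ?case unfolding enumerate_Suc .
qed

text \<open>Almost every point lies in the support: the points outside it are covered by
  the countably many null balls with centres in a countable dense set and rational radii.\<close>

lemma AE_emeasure_cball_pos:
  fixes \<nu> :: "'b::euclidean_space measure"
  assumes sets: "sets \<nu> = sets borel"
  shows "AE s in \<nu>. \<forall>\<delta>>0. emeasure \<nu> (cball s \<delta>) > 0"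
proof -
  obtain D :: "'b set" where D: "countable D" "\<And>U. open U \<Longrightarrow> U \<noteq> {} \<Longrightarrow> \<exists>d\<in>D. d \<in> U"
    using countable_dense_setE by blast
  define I where "I = {(d, r). d \<in> D \<and> r \<in> \<rat> \<and> emeasure \<nu> (ball d r) = 0}"
  have "I \<subseteq> D \<times> \<rat>" by (auto simp: I_def)
  then have "countable I" using D(1) countable_rat by (meson countable_SIGMA countable_subset)
  then have null: "(\<Union>(d, r)\<in>I. ball d r) \<in> null_sets \<nu>"
    by (intro null_sets_UN') (auto simp: I_def null_sets_def sets)
  show ?thesis
  proof (rule AE_I'[OF null], rule subsetI)
    fix s assume "s \<in> {x \<in> space \<nu>. \<not> (\<forall>\<delta>>0. 0 < emeasure \<nu> (cball x \<delta>))}"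
    then obtain \<delta> :: real where \<delta>: "0 < \<delta>" and "emeasure \<nu> (cball s \<delta>) = 0"
      by (auto simp: not_gr_zero)
    obtain d where d: "d \<in> D" "d \<in> ball s (\<delta>/3)"
      using D(2)[of "ball s (\<delta>/3)"] \<delta> by auto
    obtain r where r: "r \<in> \<rat>" "\<delta>/3 < r" "r < 2*\<delta>/3"
      using Rats_dense_in_real[of "\<delta>/3" "2*\<delta>/3"] \<delta> by auto
    have "ball d r \<subseteq> cball s \<delta>"
      using d r by (auto simp: subset_iff) (smt (verit) dist_triangle)
    then have "emeasure \<nu> (ball d r) \<le> emeasure \<nu> (cball s \<delta>)"
      by (rule emeasure_mono) (simp add: sets)
    with \<open>emeasure \<nu> (cball s \<delta>) = 0\<close> have "(d, r) \<in> I"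
      using d r by (auto simp: I_def)
    moreover have "s \<in> ball d r" using d r by (simp add: dist_commute)
    ultimately show "s \<in> (\<Union>(d, r)\<in>I. ball d r)" by blast
  qed
qed

locale iid_rejection = prob_space M for M :: "'a measure" +
  fixes X :: "nat \<Rightarrow> 'a \<Rightarrow> 'c::euclidean_space" and E :: "'c set"
  assumes indep: "indep_vars (\<lambda>_. borel) X UNIV"
    and identically_distributed: "\<And>i. distr M borel (X i) = distr M borel (X 0)"
    and E[measurable]: "E \<in> sets borel"
    and accept_prob_pos: "0 < prob {\<omega>\<in>space M. X 0 \<omega> \<in> E}"
begin

definition accept_prob :: real where
  "accept_prob = prob {\<omega>\<in>space M. X 0 \<omega> \<in> E}"

definition accepted :: "nat \<Rightarrow> 'a \<Rightarrow> nat" where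
  "accepted j \<omega> = enumerate {i. X i \<omega> \<in> E} j"

definition n_accepted :: "nat \<Rightarrow> 'a \<Rightarrow> nat" where
  "n_accepted i \<omega> = card {k. k < i \<and> X k \<omega> \<in> E}"

definition prob_n_accepted :: "nat \<Rightarrow> nat \<Rightarrow> real" where
  "prob_n_accepted j i = (\<integral>\<omega>. (if n_accepted i \<omega> = j then 1 else 0) \<partial>M)"

definition expectation_on_E :: "('c \<Rightarrow> real) \<Rightarrow> real" where
  "expectation_on_E g = (\<integral>\<omega>. indicator E (X 0 \<omega>) * g (X 0 \<omega>) \<partial>M)"

text \<open>The \<open>i\<close>-th summand of \<open>g (X (accepted j \<omega>) \<omega>)\<close>: a function of the past
  \<open>X 0, \<dots>, X (i - 1)\<close> times a function of \<open>X i\<close>.\<close>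

definition accepted_term :: "nat \<Rightarrow> ('c \<Rightarrow> real) \<Rightarrow> nat \<Rightarrow> 'a \<Rightarrow> real" where
  "accepted_term j g i \<omega> =
    (if n_accepted i \<omega> = j then 1 else 0) * (indicator E (X i \<omega>) * g (X i \<omega>))"

lemma measurable_X[measurable]: "X i \<in> borel_measurable M"
  using indep unfolding indep_vars_def2 by auto

lemma prob_X_in_E: "prob {\<omega>\<in>space M. X i \<omega> \<in> E} = accept_prob"
proof -
  have "prob {\<omega>\<in>space M. X i \<omega> \<in> E} = measure (distr M borel (X i)) E"
    by (subst measure_distr) (auto intro!: arg_cong[where f=prob])
  also have "\<dots> = accept_prob"
    unfolding identically_distributed[of i] accept_prob_def
    by (subst measure_distr) (auto intro!: arg_cong[where f=prob])
  finally show ?thesis .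
qed

lemma
  fixes g :: "'c \<Rightarrow> real"
  assumes [measurable]: "g \<in> borel_measurable borel"
  shows integrable_X_iff: "integrable M (\<lambda>\<omega>. g (X i \<omega>)) \<longleftrightarrow> integrable M (\<lambda>\<omega>. g (X 0 \<omega>))"
    and integral_X_eq: "(\<integral>\<omega>. g (X i \<omega>) \<partial>M) = (\<integral>\<omega>. g (X 0 \<omega>) \<partial>M)"
  using integrable_distr_eq[of "X i" M borel g] integrable_distr_eq[of "X 0" M borel g]
    integral_distr[of "X i" M borel g] integral_distr[of "X 0" M borel g]
    identically_distributed[of i]
  by simp_all

lemma indep_past_present:
  "indep_var (PiM {..<i} (\<lambda>_. borel)) (\<lambda>\<omega>. restrict (\<lambda>k. X k \<omega>) {..<i})
             (PiM {i} (\<lambda>_. borel)) (\<lambda>\<omega>. restrict (\<lambda>k. X k \<omega>) {i})"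
proof -
  let ?K = "case_bool {..<i} {i}"
  have "disjoint_family_on ?K UNIV"
    by (auto simp: disjoint_family_on_def split: bool.split)
  from indep_vars_restrict[OF indep _ this]
  have *: "indep_vars (\<lambda>b. PiM (?K b) (\<lambda>_. borel)) (\<lambda>b \<omega>. restrict (\<lambda>k. X k \<omega>) (?K b)) UNIV"
    by simp
  have eq: "(\<lambda>b. PiM (?K b) (\<lambda>_. borel)) =
      case_bool (PiM {..<i} (\<lambda>_. borel)) (PiM {i} (\<lambda>_. borel))"
    "(\<lambda>b \<omega>. restrict (\<lambda>k. X k \<omega>) (?K b)) =
      case_bool (\<lambda>\<omega>. restrict (\<lambda>k. X k \<omega>) {..<i}) (\<lambda>\<omega>. restrict (\<lambda>k. X k \<omega>) {i})"
    by (rule ext, simp split: bool.split)+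
  show ?thesis using * unfolding indep_var_def eq .
qed

lemma
  fixes Z :: "(nat \<Rightarrow> 'c) \<Rightarrow> real" and W :: "'c \<Rightarrow> real"
  assumes Z[measurable]: "Z \<in> borel_measurable (PiM {..<i} (\<lambda>_. borel))"
    and [measurable]: "W \<in> borel_measurable borel"
    and iZ: "integrable M (\<lambda>\<omega>. Z (restrict (\<lambda>k. X k \<omega>) {..<i}))"
    and iW: "integrable M (\<lambda>\<omega>. W (X i \<omega>))"
  shows integral_past_times_present:
      "(\<integral>\<omega>. Z (restrict (\<lambda>k. X k \<omega>) {..<i}) * W (X i \<omega>) \<partial>M) =
       (\<integral>\<omega>. Z (restrict (\<lambda>k. X k \<omega>) {..<i}) \<partial>M) * (\<integral>\<omega>. W (X i \<omega>) \<partial>M)"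
    and integrable_past_times_present:
      "integrable M (\<lambda>\<omega>. Z (restrict (\<lambda>k. X k \<omega>) {..<i}) * W (X i \<omega>))"
proof -
  have W': "(\<lambda>y. W (y i)) \<in> borel_measurable (PiM {i} (\<lambda>_. borel))" by measurable
  have "indep_var borel (\<lambda>\<omega>. Z (restrict (\<lambda>k. X k \<omega>) {..<i})) borel (\<lambda>\<omega>. W (X i \<omega>))"
    using indep_var_compose[OF indep_past_present Z W'] by (simp add: comp_def)
  from indep_var_lebesgue_integral[OF this iZ iW] indep_var_integrable[OF this iZ iW]
  show "(\<integral>\<omega>. Z (restrict (\<lambda>k. X k \<omega>) {..<i}) * W (X i \<omega>) \<partial>M) =
       (\<integral>\<omega>. Z (restrict (\<lambda>k. X k \<omega>) {..<i}) \<partial>M) * (\<integral>\<omega>. W (X i \<omega>) \<partial>M)"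
    and "integrable M (\<lambda>\<omega>. Z (restrict (\<lambda>k. X k \<omega>) {..<i}) * W (X i \<omega>))" .
qed

lemma prob_no_acceptance_from: "prob {\<omega>\<in>space M. \<forall>k\<ge>m. X k \<omega> \<notin> E} = 0"
proof -
  let ?S = "{\<omega>\<in>space M. \<forall>k\<ge>m. X k \<omega> \<notin> E}"
  define A where "A k = X k -` (- E) \<inter> space M" for k
  have "prob ?S \<le> (1 - accept_prob) ^ Suc L" for L
  proof -
    let ?J = "{m..<m + Suc L}"
    have "indep_sets (\<lambda>i. {X i -` A \<inter> space M | A. A \<in> sets borel}) UNIV"
      using indep unfolding indep_vars_def2 by simp
    moreover have "\<forall>k\<in>?J. A k \<in> {X k -` B \<inter> space M | B. B \<in> sets borel}"
      unfolding A_def using borel_comp[OF E] by blast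
    ultimately have "prob (\<Inter>k\<in>?J. A k) = (\<Prod>k\<in>?J. prob (A k))"
      by (intro indep_setsD) auto
    also have "\<dots> = (1 - accept_prob) ^ Suc L"
    proof -
      have "A k = space M - {\<omega>\<in>space M. X k \<omega> \<in> E}" for k by (auto simp: A_def)
      then have "prob (A k) = 1 - accept_prob" for k
        using prob_compl[of "{\<omega>\<in>space M. X k \<omega> \<in> E}"] prob_X_in_E[of k] by simp
      then show ?thesis by simp
    qed
    finally have "prob (\<Inter>k\<in>?J. A k) = (1 - accept_prob) ^ Suc L" .
    moreover have "prob ?S \<le> prob (\<Inter>k\<in>?J. A k)"
      by (intro finite_measure_mono) (auto simp: A_def)
    ultimately show ?thesis by simp
  qed
  moreover have "(\<lambda>L. (1 - accept_prob) ^ Suc L) \<longlonglongrightarrow> 0"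
    using accept_prob_pos by (intro LIMSEQ_Suc LIMSEQ_power_zero) (auto simp: accept_prob_def)
  ultimately have "prob ?S \<le> 0" by (intro LIMSEQ_le_const) auto
  then show ?thesis by (simp add: measure_le_0_iff)
qed

lemma AE_infinitely_many_accepted: "AE \<omega> in M. infinite {i. X i \<omega> \<in> E}"
proof -
  define S where "S m = {\<omega>\<in>space M. \<forall>k\<ge>m. X k \<omega> \<notin> E}" for m
  have [measurable]: "S m \<in> events" for m unfolding S_def by measurable
  have null: "(\<Union>m. S m) \<in> null_sets M"
    using prob_no_acceptance_from
    by (intro null_sets_UN) (auto simp: S_def null_sets_def emeasure_eq_measure)
  show ?thesis
  proof (rule AE_I'[OF null], rule subsetI)
    fix \<omega> assume "\<omega> \<in> {\<omega> \<in> space M. \<not> infinite {i. X i \<omega> \<in> E}}"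
    then obtain m where "\<omega> \<in> space M" "\<forall>k\<in>{i. X i \<omega> \<in> E}. k < m"
      using finite_nat_set_iff_bounded by auto
    then have "\<omega> \<in> S m" by (auto simp: S_def)
    then show "\<omega> \<in> (\<Union>m. S m)" by blast
  qed
qed

lemma accepted_term_eq:
  assumes "infinite {i. X i \<omega> \<in> E}"
  shows "accepted_term j g i \<omega> = (if i = accepted j \<omega> then g (X (accepted j \<omega>) \<omega>) else 0)"
  using enumerate_eq_iff[OF assms, of j i]
  by (auto simp: accepted_term_def accepted_def n_accepted_def indicator_def)

lemma measurable_accepted[measurable]: "accepted j \<in> measurable M (count_space UNIV)"
  unfolding accepted_def[abs_def] by (rule measurable_enumerate) simp

lemma measurable_X_accepted:
  assumes [measurable]: "g \<in> borel_measurable borel"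
  shows "(\<lambda>\<omega>. g (X (accepted j \<omega>) \<omega>)) \<in> borel_measurable M"
  by (rule measurable_compose_countable[where f="\<lambda>i \<omega>. g (X i \<omega>)" and g="accepted j"]) auto

lemma n_accepted_eq_past:
  "(if n_accepted i \<omega> = j then 1 else 0) =
   (\<lambda>y. if (\<Sum>k<i. indicator E (y k)) = real j then 1 else 0 :: real) (restrict (\<lambda>k. X k \<omega>) {..<i})"
proof -
  have "{k. k < i \<and> X k \<omega> \<in> E} = {..<i} \<inter> {k. X k \<omega> \<in> E}" by auto
  then have "real (n_accepted i \<omega>) = (\<Sum>k<i. indicator E (X k \<omega>))"
    unfolding n_accepted_def by (simp add: sum.If_cases indicator_def)
  then show ?thesis by simp
qed

lemma
  fixes g :: "'c \<Rightarrow> real"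
  assumes [measurable]: "g \<in> borel_measurable borel" and ig: "integrable M (\<lambda>\<omega>. g (X 0 \<omega>))"
  shows integrable_accepted_term: "integrable M (accepted_term j g i)"
    and integral_accepted_term:
      "(\<integral>\<omega>. accepted_term j g i \<omega> \<partial>M) = prob_n_accepted j i * expectation_on_E g"
proof -
  let ?Z = "\<lambda>y. if (\<Sum>k<i. indicator E (y k)) = real j then 1 else 0 :: real"
  have [measurable]: "?Z \<in> borel_measurable (PiM {..<i} (\<lambda>_. borel))" by measurable
  have iZ: "integrable M (\<lambda>\<omega>. ?Z (restrict (\<lambda>k. X k \<omega>) {..<i}))"
    by (rule integrable_const_bound[where B=1]) auto
  have "integrable M (\<lambda>\<omega>. indicator E (X 0 \<omega>) * g (X 0 \<omega>))"
    by (rule Bochner_Integration.integrable_bound[OF ig]) (auto simp: indicator_def)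
  then have iW: "integrable M (\<lambda>\<omega>. indicator E (X i \<omega>) * g (X i \<omega>))"
    using integrable_X_iff[of "\<lambda>x. indicator E x * g x" i] by simp
  show "integrable M (accepted_term j g i)"
    using integrable_past_times_present[OF _ _ iZ iW]
    unfolding accepted_term_def n_accepted_eq_past by simp
  show "(\<integral>\<omega>. accepted_term j g i \<omega> \<partial>M) = prob_n_accepted j i * expectation_on_E g"
    using integral_past_times_present[OF _ _ iZ iW]
      integral_X_eq[of "\<lambda>x. indicator E x * g x" i]
    unfolding accepted_term_def prob_n_accepted_def expectation_on_E_def n_accepted_eq_past
    by simp
qed

lemma expectation_on_E_one: "expectation_on_E (\<lambda>_. 1) = accept_prob"
proof -
  have "expectation_on_E (\<lambda>_. 1) = (\<integral>\<omega>. indicator {\<omega>\<in>space M. X 0 \<omega> \<in> E} \<omega> \<partial>M)"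
    unfolding expectation_on_E_def
    by (rule Bochner_Integration.integral_cong) (auto simp: indicator_def)
  then show ?thesis by (simp add: accept_prob_def Int_absorb2)
qed

text \<open>At most one acceptance index \<open>i\<close> is the \<open>j\<close>-th one, so the partial sums are
  bounded by \<open>1 / accept_prob\<close>.\<close>

lemma summable_prob_n_accepted: "summable (prob_n_accepted j)"
proof (rule summableI_nonneg_bounded[where x="1 / accept_prob"])
  show "0 \<le> prob_n_accepted j i" for i
    unfolding prob_n_accepted_def by (rule Bochner_Integration.integral_nonneg) simp
  fix n
  have "(\<Sum>i<n. prob_n_accepted j i) * accept_prob =
      (\<Sum>i<n. \<integral>\<omega>. accepted_term j (\<lambda>_. 1) i \<omega> \<partial>M)"
    by (simp add: sum_distrib_right integral_accepted_term expectation_on_E_one)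
  also have "\<dots> = (\<integral>\<omega>. (\<Sum>i<n. accepted_term j (\<lambda>_. 1) i \<omega>) \<partial>M)"
    by (rule Bochner_Integration.integral_sum[symmetric]) (simp add: integrable_accepted_term)
  also have "\<dots> \<le> (\<integral>\<omega>. 1 \<partial>M)"
  proof (rule integral_mono_AE)
    show "integrable M (\<lambda>\<omega>. \<Sum>i<n. accepted_term j (\<lambda>_. 1) i \<omega>)"
      by (simp add: integrable_accepted_term)
    show "AE \<omega> in M. (\<Sum>i<n. accepted_term j (\<lambda>_. 1) i \<omega>) \<le> 1"
      using AE_infinitely_many_accepted by eventually_elim (simp add: accepted_term_eq)
  qed simp
  finally show "(\<Sum>i<n. prob_n_accepted j i) \<le> 1 / accept_prob"
    using accept_prob_pos by (simp add: accept_prob_def field_simps prob_space)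
qed

lemma
  fixes g :: "'c \<Rightarrow> real"
  assumes [measurable]: "g \<in> borel_measurable borel" and ig: "integrable M (\<lambda>\<omega>. g (X 0 \<omega>))"
  shows integrable_X_accepted_sum: "integrable M (\<lambda>\<omega>. g (X (accepted j \<omega>) \<omega>))"
    and integral_X_accepted_sum:
      "(\<integral>\<omega>. g (X (accepted j \<omega>) \<omega>) \<partial>M) = suminf (prob_n_accepted j) * expectation_on_E g"
proof -
  have int: "integrable M (accepted_term j g i)" for i
    using integrable_accepted_term[OF _ ig] by simp
  have AE_summable: "AE \<omega> in M. summable (\<lambda>i. norm (accepted_term j g i \<omega>))"
    using AE_infinitely_many_accepted
    by eventually_elim (rule summable_finite[of "{accepted j _}"], auto simp: accepted_term_eq)
  have "norm (accepted_term j g i \<omega>) = accepted_term j (\<lambda>x. \<bar>g x\<bar>) i \<omega>" for i \<omega>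
    by (simp add: accepted_term_def abs_mult indicator_def)
  then have "(\<integral>\<omega>. norm (accepted_term j g i \<omega>) \<partial>M) =
      prob_n_accepted j i * expectation_on_E (\<lambda>x. \<bar>g x\<bar>)" for i
    using integral_accepted_term[of "\<lambda>x. \<bar>g x\<bar>"] ig by simp
  then have summable_int: "summable (\<lambda>i. \<integral>\<omega>. norm (accepted_term j g i \<omega>) \<partial>M)"
    by (simp add: summable_mult2 summable_prob_n_accepted)
  have AE_eq: "AE \<omega> in M. g (X (accepted j \<omega>) \<omega>) = (\<Sum>i. accepted_term j g i \<omega>)"
    using AE_infinitely_many_accepted
  proof eventually_elim
    case (elim \<omega>)
    show ?case
      using sums_unique[OF sums_single[of "accepted j \<omega>" "\<lambda>_. g (X (accepted j \<omega>) \<omega>)"]]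
      by (simp add: accepted_term_eq[OF elim])
  qed
  have iS: "integrable M (\<lambda>\<omega>. \<Sum>i. accepted_term j g i \<omega>)"
    by (rule integrable_suminf[OF int AE_summable summable_int])
  show "integrable M (\<lambda>\<omega>. g (X (accepted j \<omega>) \<omega>))"
    by (rule integrable_cong_AE_imp[OF iS measurable_X_accepted]) (use AE_eq in auto)
  have "(\<integral>\<omega>. g (X (accepted j \<omega>) \<omega>) \<partial>M) = (\<integral>\<omega>. (\<Sum>i. accepted_term j g i \<omega>) \<partial>M)"
    by (rule integral_cong_AE[OF measurable_X_accepted borel_measurable_integrable[OF iS] AE_eq])
      simp
  also have "\<dots> = (\<Sum>i. \<integral>\<omega>. accepted_term j g i \<omega> \<partial>M)"
    by (rule integral_suminf[OF int AE_summable summable_int])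
  also have "\<dots> = suminf (prob_n_accepted j) * expectation_on_E g"
    using integral_accepted_term[OF _ ig]
    by (simp add: suminf_mult2[OF summable_prob_n_accepted])
  finally show "(\<integral>\<omega>. g (X (accepted j \<omega>) \<omega>) \<partial>M) =
      suminf (prob_n_accepted j) * expectation_on_E g" .
qed

lemma suminf_prob_n_accepted: "suminf (prob_n_accepted j) = 1 / accept_prob"
proof -
  have "1 = (\<integral>\<omega>. (\<lambda>_. 1 :: real) (X (accepted j \<omega>) \<omega>) \<partial>M)"
    by (simp add: prob_space)
  also have "\<dots> = suminf (prob_n_accepted j) * expectation_on_E (\<lambda>_. 1)"
    by (rule integral_X_accepted_sum) simp_all
  also have "\<dots> = suminf (prob_n_accepted j) * accept_prob"
    unfolding expectation_on_E_one ..
  finally show ?thesis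
    using accept_prob_pos unfolding accept_prob_def[symmetric] by (simp add: field_simps)
qed

lemma
  fixes g :: "'c \<Rightarrow> real"
  assumes "g \<in> borel_measurable borel" and "integrable M (\<lambda>\<omega>. g (X 0 \<omega>))"
  shows integrable_X_accepted: "integrable M (\<lambda>\<omega>. g (X (accepted j \<omega>) \<omega>))"
    and integral_X_accepted:
      "(\<integral>\<omega>. g (X (accepted j \<omega>) \<omega>) \<partial>M) = expectation_on_E g / accept_prob"
proof -
  show "integrable M (\<lambda>\<omega>. g (X (accepted j \<omega>) \<omega>))"
    by (rule integrable_X_accepted_sum[OF assms])
  show "(\<integral>\<omega>. g (X (accepted j \<omega>) \<omega>) \<partial>M) = expectation_on_E g / accept_prob"
    unfolding integral_X_accepted_sum[OF assms] suminf_prob_n_accepted by simp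
qed

end

lemma
  fixes f :: "'b::euclidean_space \<Rightarrow> 'a::euclidean_space \<Rightarrow> real" and g :: "'a \<Rightarrow> real"
    and Y :: "'m \<Rightarrow> 'b \<times> 'a"
  assumes D: "distributed M lborel Y (\<lambda>x. ennreal (f (fst x) (snd x)))"
    and f_nonneg: "\<And>s t. f s t \<ge> 0"
    and [measurable]: "g \<in> borel_measurable borel" "C \<in> sets borel"
    and ig: "integrable M (\<lambda>\<omega>. g (snd (Y \<omega>)))"
  shows integrable_indicator_phi: "integrable lborel (\<lambda>s. indicator C s * phi f g s)"
    and integral_indicator_fst_eq_phi:
      "(\<integral>\<omega>. indicator C (fst (Y \<omega>)) * g (snd (Y \<omega>)) \<partial>M) = (LINT s:C|lborel. phi f g s)"
proof -
  define G where "G x = indicator C (fst x) * g (snd x)" for x :: "'b \<times> 'a"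
  define H where "H x = f (fst x) (snd x) * G x" for x :: "'b \<times> 'a"
  have [measurable]: "Y \<in> measurable M borel" using distributed_measurable[OF D] by simp
  have [measurable]: "G \<in> borel_measurable borel"
    unfolding G_def borel_prod[symmetric] by measurable
  have "integrable M (\<lambda>\<omega>. G (Y \<omega>))"
  proof (rule Bochner_Integration.integrable_bound[OF ig])
    show "(\<lambda>\<omega>. G (Y \<omega>)) \<in> borel_measurable M" by measurable
  qed (auto simp: G_def indicator_def)
  then have "integrable lborel H"
    unfolding H_def using distributed_integrable[OF D, of G] f_nonneg by simp
  then have int2: "integrable (lborel \<Otimes>\<^sub>M lborel) H"
    by (simp add: lborel_prod)
  have inner: "(\<integral>t. H (s, t) \<partial>lborel) = indicator C s * phi f g s" for s
  proof -
    have "(\<lambda>t. H (s, t)) = (\<lambda>t. indicator C s * (g t * f s t))"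
      by (rule ext) (simp add: H_def G_def)
    then show ?thesis by (simp add: phi_def)
  qed
  show "integrable lborel (\<lambda>s. indicator C s * phi f g s)"
    using lborel_pair.integrable_fst'[OF int2] unfolding inner .
  have "(\<integral>\<omega>. G (Y \<omega>) \<partial>M) = integral\<^sup>L lborel H"
    unfolding H_def using distributed_integral[OF D, of G] f_nonneg by simp
  also have "\<dots> = (\<integral>s. (\<integral>t. H (s, t) \<partial>lborel) \<partial>lborel)"
    using lborel_pair.integral_fst'[OF int2] by (simp add: lborel_prod)
  finally show "(\<integral>\<omega>. indicator C (fst (Y \<omega>)) * g (snd (Y \<omega>)) \<partial>M) = (LINT s:C|lborel. phi f g s)"
    unfolding inner set_lebesgue_integral_def G_def by simp
qed

lemma phi_one: "phi f (\<lambda>_. 1) s = f_S f s"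
  by (simp add: phi_def f_S_def)

lemma f_S_nonneg:
  assumes "\<And>s t. f s t \<ge> 0"
  shows "0 \<le> f_S f s"
  unfolding f_S_def by (rule Bochner_Integration.integral_nonneg) (simp add: assms)

lemma cond_exp_eq_phi_div:
  assumes "\<And>s t. f s t \<ge> 0"
  shows "cond_exp f h s = phi f h s / phi f (\<lambda>_. 1) s"
proof (cases "f_S f s > 0")
  case True
  then have "(\<lambda>t. h t * cond_dens f t s) = (\<lambda>t. h t * f s t / f_S f s)"
    by (simp add: cond_dens_def)
  then have "cond_exp f h s = (\<integral>t. h t * f s t \<partial>lborel) / f_S f s"
    unfolding cond_exp_def by simp
  then show ?thesis unfolding phi_one by (simp add: phi_def)
next
  case False
  moreover have "0 \<le> f_S f s" using f_S_nonneg assms .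
  ultimately show ?thesis by (simp add: cond_exp_def cond_dens_def phi_one)
qed

lemma emeasure_density_f_S:
  fixes f :: "'b::euclidean_space \<Rightarrow> 'a::euclidean_space \<Rightarrow> real"
  assumes "prob_space M"
    and D: "distributed M lborel Y (\<lambda>x. ennreal (f (fst x) (snd x)))"
    and f_nonneg: "\<And>s t. f s t \<ge> 0"
    and C[measurable]: "C \<in> sets borel"
  shows "emeasure (density lborel (\<lambda>s. ennreal (f_S f s))) C = ennreal (LINT s:C|lborel. f_S f s)"
proof -
  interpret prob_space M by fact
  have "(\<lambda>x. f (fst x) (snd x)) \<in> borel_measurable lborel"
    using distributed_real_measurable[OF _ D] f_nonneg by simp
  then have "case_prod f \<in> borel_measurable (lborel \<Otimes>\<^sub>M lborel)"
    by (simp add: lborel_prod case_prod_beta')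
  then have [measurable]: "f_S f \<in> borel_measurable borel"
    unfolding f_S_def using lborel.borel_measurable_lebesgue_integral[of f lborel] by simp
  have "integrable lborel (\<lambda>s. indicator C s * phi f (\<lambda>_. 1) s)"
    by (rule integrable_indicator_phi[OF D f_nonneg]) (simp_all add: C)
  then have int: "integrable lborel (\<lambda>s. indicator C s * f_S f s)"
    by (simp add: phi_one)
  have "emeasure (density lborel (\<lambda>s. ennreal (f_S f s))) C =
      (\<integral>\<^sup>+s. ennreal (f_S f s) * indicator C s \<partial>lborel)"
    by (rule emeasure_density) auto
  also have "\<dots> = (\<integral>\<^sup>+s. ennreal (indicator C s * f_S f s) \<partial>lborel)"
    by (rule nn_integral_cong) (simp add: indicator_def)
  also have "\<dots> = ennreal (\<integral>s. indicator C s * f_S f s \<partial>lborel)"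
    by (rule nn_integral_eq_integral[OF int]) (simp add: f_S_nonneg[OF f_nonneg])
  finally show ?thesis by (simp add: set_lebesgue_integral_def)
qed

lemma sets_borel_norm_fst_le:
  "{x :: 'b::euclidean_space \<times> 'a::euclidean_space. norm (fst x - s) \<le> \<delta>} \<in> sets borel"
proof -
  have "{x :: 'b \<times> 'a. norm (fst x - s) \<le> \<delta>} = fst -` cball s \<delta> \<inter> space (borel \<Otimes>\<^sub>M borel)"
    by (auto simp: dist_norm norm_minus_commute space_pair_measure)
  also have "\<dots> \<in> sets (borel \<Otimes>\<^sub>M borel)"
    by (rule measurable_sets[OF measurable_fst]) simp
  finally show ?thesis unfolding borel_prod .
qed

lemma distr_borel_eq_if_same_density:
  fixes U V :: "'m \<Rightarrow> 'c::euclidean_space"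
  assumes "distributed M lborel U d" and "distributed M lborel V d"
  shows "distr M borel U = distr M borel V"
proof -
  have "distr M borel W = distr M lborel W" if "distributed M lborel W d" for W :: "'m \<Rightarrow> 'c"
    using distributed_measurable[OF that] by (intro distr_cong) auto
  then show ?thesis
    using assms distributed_distr_eq_density[OF assms(1)] distributed_distr_eq_density[OF assms(2)]
    by metis
qed

lemma
  fixes M :: "'m measure"
    and X :: "nat \<Rightarrow> 'm \<Rightarrow> 'b::euclidean_space \<times> 'a::euclidean_space"
    and f :: "'b \<Rightarrow> 'a \<Rightarrow> real"
    and h :: "'a \<Rightarrow> real"
  assumes "prob_space M"
    and indep: "prob_space.indep_vars M (\<lambda>_. borel) X UNIV"
    and D: "\<And>i. distributed M lborel (X i) (\<lambda>x. ennreal (f (fst x) (snd x)))"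
    and f_nonneg: "\<And>s t. f s t \<ge> 0"
    and hm[measurable]: "h \<in> borel_measurable borel"
    and ih: "integrable M (\<lambda>\<omega>. h (snd (X 0 \<omega>)))"
    and "0 < \<delta>"
    and mass_pos: "0 < (LINT s':cball s \<delta>|lborel. f_S f s')"
  shows integrable_theta_abc: "integrable M (\<lambda>\<omega>. h (theta_abc X s \<delta> j \<omega>))"
    and integral_theta_abc:
      "(\<integral>\<omega>. h (theta_abc X s \<delta> j \<omega>) \<partial>M) = phi_delta f h s \<delta> / phi_delta f (\<lambda>_. 1) s \<delta>"
proof -
  interpret prob_space M by fact
  define E where "E = {x :: 'b \<times> 'a. norm (fst x - s) \<le> \<delta>}"
  have indicator_E: "indicator E x = (indicator (cball s \<delta>) (fst x) :: real)" for x
    by (simp add: E_def indicator_def dist_norm norm_minus_commute)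
  have [measurable]: "E \<in> sets borel"
    unfolding E_def by (rule sets_borel_norm_fst_le)
  have [measurable]: "X i \<in> borel_measurable M" for i
    using distributed_measurable[OF D[of i]] by simp
  have identically_distributed: "distr M borel (X i) = distr M borel (X 0)" for i
    using distr_borel_eq_if_same_density[OF D[of i] D[of 0]] .
  have integral_E: "(\<integral>\<omega>. indicator E (X 0 \<omega>) * g (snd (X 0 \<omega>)) \<partial>M) = (LINT s':cball s \<delta>|lborel. phi f g s')"
    if [measurable]: "g \<in> borel_measurable borel" and "integrable M (\<lambda>\<omega>. g (snd (X 0 \<omega>)))" for g
    unfolding indicator_E by (rule integral_indicator_fst_eq_phi[OF D f_nonneg]) (simp_all add: that)
  have "prob {\<omega>\<in>space M. X 0 \<omega> \<in> E} = (\<integral>\<omega>. indicator {\<omega>\<in>space M. X 0 \<omega> \<in> E} \<omega> \<partial>M)"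
    by (simp add: Int_absorb2)
  also have "\<dots> = (\<integral>\<omega>. indicator E (X 0 \<omega>) * 1 \<partial>M)"
    by (rule Bochner_Integration.integral_cong) (auto simp: indicator_def)
  also have "\<dots> = (LINT s':cball s \<delta>|lborel. f_S f s')"
    using integral_E[of "\<lambda>_. 1", OF borel_measurable_const integrable_const]
    unfolding phi_one .
  finally have prob_E: "prob {\<omega>\<in>space M. X 0 \<omega> \<in> E} = (LINT s':cball s \<delta>|lborel. f_S f s')" .
  interpret iid_rejection M X E
    using indep identically_distributed mass_pos prob_E by unfold_locales auto
  have theta: "theta_abc X s \<delta> j \<omega> = snd (X (accepted j \<omega>) \<omega>)" for j \<omega>
    unfolding theta_abc_def acc_set_def accepted_def by (simp add: E_def)
  have [measurable]: "(\<lambda>x. h (snd x)) \<in> borel_measurable (borel :: ('b \<times> 'a) measure)"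
    unfolding borel_prod[symmetric] by measurable
  show "integrable M (\<lambda>\<omega>. h (theta_abc X s \<delta> j \<omega>))"
    using integrable_X_accepted[of "\<lambda>x. h (snd x)"] ih unfolding theta by simp
  have "(\<integral>\<omega>. h (theta_abc X s \<delta> j \<omega>) \<partial>M) = expectation_on_E (\<lambda>x. h (snd x)) / accept_prob"
    using integral_X_accepted[of "\<lambda>x. h (snd x)"] ih unfolding theta by simp
  also have "\<dots> = (LINT s':cball s \<delta>|lborel. phi f h s') / (LINT s':cball s \<delta>|lborel. f_S f s')"
    unfolding expectation_on_E_def accept_prob_def prob_E integral_E[OF hm ih] ..
  also have "\<dots> = phi_delta f h s \<delta> / phi_delta f (\<lambda>_. 1) s \<delta>"
    using content_cball_pos[OF \<open>0 < \<delta>\<close>] unfolding phi_delta_def phi_one by simp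
  finally show "(\<integral>\<omega>. h (theta_abc X s \<delta> j \<omega>) \<partial>M) = phi_delta f h s \<delta> / phi_delta f (\<lambda>_. 1) s \<delta>" .
qed

lemma integral_Y_abc:
  assumes "\<And>j. integrable M (\<lambda>\<omega>. h (theta_abc X s \<delta> j \<omega>))"
    and "\<And>j. (\<integral>\<omega>. h (theta_abc X s \<delta> j \<omega>) \<partial>M) = c"
    and "1 \<le> n"
  shows "(\<integral>\<omega>. Y_abc X h s \<delta> n \<omega> \<partial>M) = c"
proof -
  have "(\<integral>\<omega>. Y_abc X h s \<delta> n \<omega> \<partial>M) = (\<Sum>j<n. \<integral>\<omega>. h (theta_abc X s \<delta> j \<omega>) \<partial>M) / real n"
    unfolding Y_abc_def by (simp add: Bochner_Integration.integral_sum assms(1))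
  with assms(2,3) show ?thesis by simp
qed

theorem lemma1:
  fixes M :: "'m measure"
    and X :: "nat \<Rightarrow> 'm \<Rightarrow> 'b::euclidean_space \<times> 'a::euclidean_space"
    and f :: "'b \<Rightarrow> 'a \<Rightarrow> real"
    and h :: "'a \<Rightarrow> real"
  assumes "prob_space M"
    and "prob_space.indep_vars M (\<lambda>_. borel) X UNIV"
    and "\<And>i. distributed M lborel (X i) (\<lambda>x. ennreal (f (fst x) (snd x)))"
    and "\<And>s t. f s t \<ge> 0"
    and "h \<in> borel_measurable borel"
    and "integrable M (\<lambda>\<omega>. h (snd (X 0 \<omega>)))"
  shows "AE s in density lborel (\<lambda>s. ennreal (f_S f s)).
           cond_exp f h s = phi f h s / phi f (\<lambda>_. 1) s \<and>
           (\<forall>\<delta>>0. \<forall>n\<ge>1.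
              (\<integral>\<omega>. Y_abc X h s \<delta> n \<omega> \<partial>M) = (\<integral>\<omega>. h (theta_abc X s \<delta> 0 \<omega>) \<partial>M) \<and>
              (\<integral>\<omega>. h (theta_abc X s \<delta> 0 \<omega>) \<partial>M) = phi_delta f h s \<delta> / phi_delta f (\<lambda>_. 1) s \<delta>)"
proof -
  let ?\<nu> = "density lborel (\<lambda>s. ennreal (f_S f s))"
  have "AE s in ?\<nu>. \<forall>\<delta>>0. 0 < emeasure ?\<nu> (cball s \<delta>)"
    by (rule AE_emeasure_cball_pos) simp
  then show ?thesis
  proof eventually_elim
    case (elim s)
    have mass_pos: "0 < (LINT s':cball s \<delta>|lborel. f_S f s')" if "0 < \<delta>" for \<delta>
      using elim that emeasure_density_f_S[OF assms(1) assms(3) assms(4) borel_closed[OF closed_cball]]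
      by (metis ennreal_less_zero_iff)
    show ?case
    proof (intro conjI allI impI)
      show "cond_exp f h s = phi f h s / phi f (\<lambda>_. 1) s"
        using cond_exp_eq_phi_div[OF assms(4)] .
      fix \<delta> :: real and n :: nat
      assume "0 < \<delta>" "1 \<le> n"
      note theta = integrable_theta_abc[OF assms \<open>0 < \<delta>\<close> mass_pos[OF \<open>0 < \<delta>\<close>]]
        integral_theta_abc[OF assms \<open>0 < \<delta>\<close> mass_pos[OF \<open>0 < \<delta>\<close>]]
      show "(\<integral>\<omega>. h (theta_abc X s \<delta> 0 \<omega>) \<partial>M) = phi_delta f h s \<delta> / phi_delta f (\<lambda>_. 1) s \<delta>"
        by (rule theta(2))
      then show "(\<integral>\<omega>. Y_abc X h s \<delta> n \<omega> \<partial>M) = (\<integral>\<omega>. h (theta_abc X s \<delta> 0 \<omega>) \<partial>M)"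
        using integral_Y_abc[OF theta \<open>1 \<le> n\<close>] by simp
    qed
  qed
qed

end
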